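(* In the setting below, $\kappa_0=\rho$, and for every $\alpha\in\mathbb{N}^N$ with $|\alpha|\ge1$, \[ |\kappa_\alpha|\le(|\alpha|+1)^{|\alpha|}\lambda^{|\alpha|}\rho^{|V(\alpha)|}. \]
   Context: Let $n\ge1$, $\lambda\ge0$, $\rho\in(0,1)$, $v\in\{0,1\}^n$ with i.i.d. $\mathrm{Bernoulli}(\rho)$ entries, $N=n(n+1)/2$ indexed by pairs $(i,j)$ with $1\le i\le j\le n$, $X_{ij}=\lambda v_iv_j$, and $x=v_1$. An index $\alpha=(\alpha_{ij})_{i\le j}\in\mathbb{N}^N$ is viewed as a multigraph on vertex set $[n]$ (self-loops allowed) with $\alpha_{ij}$ edges between $i$ and $j$; $|\alpha|$ is its number of edges and $V(\alpha)$ the set of vertices spanned by its edges. $\kappa_\alpha$ is defined recursively by $\kappa_\alpha=\mathbb{E}[xX^\alpha]-\sum_{0\le\beta\lneq\alpha}\kappa_\beta\binom{\alpha}{\beta}\mathbb{E}[X^{\alpha-\beta}]$, with multi-index notation $X^\alpha=\prod X_{ij}^{\alpha_{ij}}$, $\binom{\alpha}{\beta}=\prod\binom{\alpha_{ij}}{\beta_{ij}}$, $\beta\le\alpha$ entrywise, $\beta\lneq\alpha$ meaning $\beta\le\alpha$, $\beta\ne\alpha$. *)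

theory Defs
  imports "HOL-Probability.Probability"
begin

definition idx :: "nat \<Rightarrow> (nat \<times> nat) set" where
  "idx n = {(i, j). 1 \<le> i \<and> i \<le> j \<and> j \<le> n}"

definition vdist :: "nat \<Rightarrow> real \<Rightarrow> (nat \<Rightarrow> bool) pmf" where
  "vdist n rho = Pi_pmf {1..n} False (\<lambda>_. bernoulli_pmf rho)"

definition Ev :: "nat \<Rightarrow> real \<Rightarrow> ((nat \<Rightarrow> bool) \<Rightarrow> real) \<Rightarrow> real" where
  "Ev n rho f = measure_pmf.expectation (vdist n rho) f"

definition Xv :: "real \<Rightarrow> (nat \<Rightarrow> bool) \<Rightarrow> nat \<times> nat \<Rightarrow> real" where
  "Xv lam v p = lam * of_bool (v (fst p)) * of_bool (v (snd p))"

definition xv :: "(nat \<Rightarrow> bool) \<Rightarrow> real" where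
  "xv v = of_bool (v 1)"

definition Xmon :: "nat \<Rightarrow> real \<Rightarrow> (nat \<times> nat \<Rightarrow> nat) \<Rightarrow> (nat \<Rightarrow> bool) \<Rightarrow> real" where
  "Xmon n lam \<alpha> v = (\<Prod>p\<in>idx n. Xv lam v p ^ \<alpha> p)"

definition mbinom :: "nat \<Rightarrow> (nat \<times> nat \<Rightarrow> nat) \<Rightarrow> (nat \<times> nat \<Rightarrow> nat) \<Rightarrow> nat" where
  "mbinom n \<alpha> \<beta> = (\<Prod>p\<in>idx n. \<alpha> p choose \<beta> p)"

text \<open>Multi-indices in N^N: functions vanishing outside idx n.\<close>
definition is_mindex :: "nat \<Rightarrow> (nat \<times> nat \<Rightarrow> nat) \<Rightarrow> bool" where
  "is_mindex n \<alpha> \<longleftrightarrow> (\<forall>p. p \<notin> idx n \<longrightarrow> \<alpha> p = 0)"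

definition msize :: "nat \<Rightarrow> (nat \<times> nat \<Rightarrow> nat) \<Rightarrow> nat" where
  "msize n \<alpha> = (\<Sum>p\<in>idx n. \<alpha> p)"

definition Vset :: "nat \<Rightarrow> (nat \<times> nat \<Rightarrow> nat) \<Rightarrow> nat set" where
  "Vset n \<alpha> = {k. \<exists>p\<in>idx n. \<alpha> p > 0 \<and> (k = fst p \<or> k = snd p)}"

lemma finite_idx: "finite (idx n)"
proof -
  have "idx n \<subseteq> {1..n} \<times> {1..n}" by (auto simp: idx_def)
  thus ?thesis by (rule finite_subset) auto
qed

function kappa :: "nat \<Rightarrow> real \<Rightarrow> real \<Rightarrow> (nat \<times> nat \<Rightarrow> nat) \<Rightarrow> real" where
  "kappa n lam rho \<alpha> =
     (if is_mindex n \<alpha> then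
        Ev n rho (\<lambda>v. xv v * Xmon n lam \<alpha> v)
        - (\<Sum>\<beta>\<in>{\<beta>. (\<forall>p. \<beta> p \<le> \<alpha> p) \<and> \<beta> \<noteq> \<alpha>}.
             kappa n lam rho \<beta> * real (mbinom n \<alpha> \<beta>)
             * Ev n rho (Xmon n lam (\<lambda>p. \<alpha> p - \<beta> p)))
      else 0)"
  by auto
termination
proof (relation "Wellfounded.measure (\<lambda>(n, lam, rho, \<alpha>). msize n \<alpha>)")
  show "wf (Wellfounded.measure (\<lambda>(n, lam, rho, \<alpha>). msize n \<alpha>))" by simp
next
  fix n lam rho \<alpha> \<beta>
  assume m: "is_mindex n \<alpha>" and b: "\<beta> \<in> {\<beta>. (\<forall>p. \<beta> p \<le> \<alpha> p) \<and> \<beta> \<noteq> \<alpha>}"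
  have "\<beta> \<noteq> \<alpha>" using b by simp
  then obtain q where q: "\<beta> q \<noteq> \<alpha> q" by (meson ext)
  have "\<beta> q \<le> \<alpha> q" using b by blast
  with q have lt: "\<beta> q < \<alpha> q" by simp
  hence "q \<in> idx n" using m unfolding is_mindex_def by (metis less_zeroE)
  hence "(\<Sum>p\<in>idx n. \<beta> p) < (\<Sum>p\<in>idx n. \<alpha> p)"
    using b lt finite_idx by (intro sum_strict_mono_ex1) blast+
  thus "((n, lam, rho, \<beta>), n, lam, rho, \<alpha>) \<in> Wellfounded.measure (\<lambda>(n, lam, rho, \<alpha>). msize n \<alpha>)"
    by (simp add: msize_def)
qed

declare kappa.simps [simp del]

end

theory Submission
  imports Defs
begin

text \<open>
  Every monomial has an explicit moment: \<open>X\<^sup>\<gamma>\<close> equals \<open>\<lambda>\<^bsup>|\<gamma>|\<^esup>\<close> on the event that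
  all vertices of \<open>V(\<gamma>)\<close> are switched on, so \<open>E[X\<^sup>\<gamma>] = \<lambda>\<^bsup>|\<gamma>|\<^esup> \<rho>\<^bsup>|V(\<gamma>)|\<^esup>\<close> and
  \<open>|E[x X\<^sup>\<gamma>]| \<le> \<lambda>\<^bsup>|\<gamma>|\<^esup> \<rho>\<^bsup>|V(\<gamma>)|\<^esup>\<close>.  The bound then follows by strong induction on \<open>|\<alpha>|\<close>:
  since \<open>V(\<alpha>) \<subseteq> V(\<beta>) \<union> V(\<alpha>-\<beta>)\<close>, each term of the recursion is at most
  \<open>binom(\<alpha>,\<beta>) |\<alpha>|\<^bsup>|\<beta>|\<^esup> \<lambda>\<^bsup>|\<alpha>|\<^esup> \<rho>\<^bsup>|V(\<alpha>)|\<^esup>\<close>, and by the multinomial binomial theorem these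
  sum over \<open>\<beta> \<lneq> \<alpha>\<close> to \<open>((|\<alpha>|+1)\<^bsup>|\<alpha>|\<^esup> - |\<alpha>|\<^bsup>|\<alpha>|\<^esup>) \<lambda>\<^bsup>|\<alpha>|\<^esup> \<rho>\<^bsup>|V(\<alpha>)|\<^esup>\<close>; the leading
  moment is absorbed by \<open>|\<alpha>|\<^bsup>|\<alpha>|\<^esup> \<ge> 1\<close>.
\<close>

lemma prod_of_bool: "finite A \<Longrightarrow> (\<Prod>x\<in>A. (of_bool (P x) :: 'a :: comm_semiring_1)) = of_bool (\<forall>x\<in>A. P x)"
  by (induction A rule: finite_induct) auto

lemma Vset_subset: "Vset n \<gamma> \<subseteq> {1..n}"
  by (auto simp: Vset_def idx_def)

lemma finite_Vset: "finite (Vset n \<gamma>)"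
  using Vset_subset by (rule finite_subset) simp

lemma Xmon_eq_indicator: "Xmon n lam \<gamma> v = lam ^ msize n \<gamma> * of_bool (\<forall>k\<in>Vset n \<gamma>. v k)"
proof -
  have pow: "Xv lam v p ^ k = lam ^ k * of_bool (k = 0 \<or> (v (fst p) \<and> v (snd p)))" for p k
    by (cases k) (auto simp: Xv_def power_mult_distrib)
  have "Xmon n lam \<gamma> v
      = (\<Prod>p\<in>idx n. lam ^ \<gamma> p) * (\<Prod>p\<in>idx n. of_bool (\<gamma> p = 0 \<or> (v (fst p) \<and> v (snd p))))"
    unfolding Xmon_def pow prod.distrib ..
  also have "\<dots> = lam ^ msize n \<gamma> * of_bool (\<forall>p\<in>idx n. \<gamma> p = 0 \<or> (v (fst p) \<and> v (snd p)))"
    unfolding msize_def power_sum prod_of_bool[OF finite_idx] ..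
  also have "(\<forall>p\<in>idx n. \<gamma> p = 0 \<or> (v (fst p) \<and> v (snd p))) = (\<forall>k\<in>Vset n \<gamma>. v k)"
    by (auto simp: Vset_def)
  finally show ?thesis .
qed

lemma Ev_all_on:
  assumes "S \<subseteq> {1..n}" "0 \<le> rho" "rho \<le> 1"
  shows "Ev n rho (\<lambda>v. of_bool (\<forall>k\<in>S. v k)) = rho ^ card S"
proof -
  have "(\<lambda>v. of_bool (\<forall>k\<in>S. v k) :: real) = (\<lambda>v. \<Prod>k\<in>{1..n}. of_bool (k \<in> S \<longrightarrow> v k))"
    using assms(1) by (auto simp: prod_of_bool intro!: arg_cong[where f = of_bool])
  then have "Ev n rho (\<lambda>v. of_bool (\<forall>k\<in>S. v k))
      = (\<Prod>k\<in>{1..n}. measure_pmf.expectation (bernoulli_pmf rho) (\<lambda>b. of_bool (k \<in> S \<longrightarrow> b)))"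
    unfolding Ev_def vdist_def
    by (simp only:) (rule expectation_prod_Pi_pmf, auto intro!: integrable_measure_pmf_finite)
  also have "\<dots> = (\<Prod>k\<in>{1..n}. if k \<in> S then rho else 1)"
    using assms by (intro prod.cong) auto
  also have "\<dots> = rho ^ card S"
    using assms(1) by (simp add: prod.If_cases Int_absorb1)
  finally show ?thesis .
qed

lemma Ev_Xmon:
  assumes "0 \<le> rho" "rho \<le> 1"
  shows "Ev n rho (Xmon n lam \<gamma>) = lam ^ msize n \<gamma> * rho ^ card (Vset n \<gamma>)"
proof -
  have "Ev n rho (Xmon n lam \<gamma>) = lam ^ msize n \<gamma> * Ev n rho (\<lambda>v. of_bool (\<forall>k\<in>Vset n \<gamma>. v k))"
    unfolding Ev_def Xmon_eq_indicator by simp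
  then show ?thesis
    using Ev_all_on[OF Vset_subset assms] by simp
qed

lemma Ev_xv_Xmon:
  assumes "0 \<le> rho" "rho \<le> 1" "1 \<le> n"
  shows "Ev n rho (\<lambda>v. xv v * Xmon n lam \<gamma> v) = lam ^ msize n \<gamma> * rho ^ card (insert 1 (Vset n \<gamma>))"
proof -
  have sub: "insert 1 (Vset n \<gamma>) \<subseteq> {1..n}"
    using Vset_subset assms(3) by auto
  have "(\<lambda>v. xv v * Xmon n lam \<gamma> v) = (\<lambda>v. lam ^ msize n \<gamma> * of_bool (\<forall>k\<in>insert 1 (Vset n \<gamma>). v k))"
    by (auto simp: xv_def Xmon_eq_indicator)
  then have "Ev n rho (\<lambda>v. xv v * Xmon n lam \<gamma> v)
      = lam ^ msize n \<gamma> * Ev n rho (\<lambda>v. of_bool (\<forall>k\<in>insert 1 (Vset n \<gamma>). v k))"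
    unfolding Ev_def by simp
  also have "\<dots> = lam ^ msize n \<gamma> * rho ^ card (insert 1 (Vset n \<gamma>))"
    using Ev_all_on[OF sub assms(1,2)] by simp
  finally show ?thesis .
qed

lemma strictly_below_eq_lessThan:
  fixes \<alpha> :: "'a \<Rightarrow> 'b :: order"
  shows "{\<beta>. (\<forall>p. \<beta> p \<le> \<alpha> p) \<and> \<beta> \<noteq> \<alpha>} = {..<\<alpha>}"
  by (auto simp: le_fun_def less_le)

lemma bij_betw_restrict_atMost:
  fixes \<alpha> :: "'a \<Rightarrow> nat"
  assumes "\<forall>p. p \<notin> I \<longrightarrow> \<alpha> p = 0"
  shows "bij_betw (\<lambda>\<beta>. restrict \<beta> I) {..\<alpha>} (PiE I (\<lambda>p. {..\<alpha> p}))"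
proof (rule bij_betw_byWitness[where f' = "\<lambda>g p. if p \<in> I then g p else 0"])
  have "\<beta> p = 0" if "\<beta> \<le> \<alpha>" "p \<notin> I" for \<beta> p
    using that assms by (metis le_0_eq le_funD)
  then show "\<forall>\<beta>\<in>{..\<alpha>}. (\<lambda>p. if p \<in> I then restrict \<beta> I p else 0) = \<beta>"
    by (auto simp: fun_eq_iff)
qed (auto simp: PiE_def extensional_def le_fun_def)

lemma finite_atMost_fun:
  fixes \<alpha> :: "'a \<Rightarrow> nat"
  assumes "finite I" "\<forall>p. p \<notin> I \<longrightarrow> \<alpha> p = 0"
  shows "finite {..\<alpha>}"
proof -
  have "finite (PiE I (\<lambda>p. {..\<alpha> p}))"
    using assms(1) by (intro finite_PiE) auto
  then show ?thesis
    using bij_betw_finite[OF bij_betw_restrict_atMost[OF assms(2)]] by simp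
qed

lemma sum_atMost_fun_prod:
  fixes \<alpha> :: "'a \<Rightarrow> nat" and f :: "'a \<Rightarrow> nat \<Rightarrow> 'c :: comm_semiring_1"
  assumes "finite I" "\<forall>p. p \<notin> I \<longrightarrow> \<alpha> p = 0"
  shows "(\<Sum>\<beta>\<le>\<alpha>. \<Prod>p\<in>I. f p (\<beta> p)) = (\<Prod>p\<in>I. \<Sum>b\<le>\<alpha> p. f p b)"
proof -
  have "(\<Prod>p\<in>I. \<Sum>b\<le>\<alpha> p. f p b) = (\<Sum>g\<in>PiE I (\<lambda>p. {..\<alpha> p}). \<Prod>p\<in>I. f p (g p))"
    using assms(1) by (rule prod_sum_PiE) simp
  also have "\<dots> = (\<Sum>\<beta>\<le>\<alpha>. \<Prod>p\<in>I. f p (restrict \<beta> I p))"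
    by (rule sum.reindex_bij_betw[OF bij_betw_restrict_atMost[OF assms(2)], symmetric])
  finally show ?thesis by simp
qed

lemma sum_mbinom_power:
  fixes c :: real
  assumes "is_mindex n \<alpha>"
  shows "(\<Sum>\<beta>\<le>\<alpha>. real (mbinom n \<alpha> \<beta>) * c ^ msize n \<beta>) = (c + 1) ^ msize n \<alpha>"
proof -
  have "(\<Sum>\<beta>\<le>\<alpha>. real (mbinom n \<alpha> \<beta>) * c ^ msize n \<beta>)
      = (\<Sum>\<beta>\<le>\<alpha>. \<Prod>p\<in>idx n. real (\<alpha> p choose \<beta> p) * c ^ \<beta> p)"
    by (simp add: mbinom_def msize_def power_sum prod.distrib)
  also have "\<dots> = (\<Prod>p\<in>idx n. \<Sum>b\<le>\<alpha> p. real (\<alpha> p choose b) * c ^ b)"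
    using finite_idx assms unfolding is_mindex_def by (rule sum_atMost_fun_prod)
  also have "\<dots> = (\<Prod>p\<in>idx n. (c + 1) ^ \<alpha> p)"
    by (simp add: binomial_ring)
  also have "\<dots> = (c + 1) ^ msize n \<alpha>"
    by (simp add: msize_def power_sum)
  finally show ?thesis .
qed

lemma sum_mbinom_power_lessThan:
  fixes c :: real
  assumes "is_mindex n \<alpha>"
  shows "(\<Sum>\<beta><\<alpha>. real (mbinom n \<alpha> \<beta>) * c ^ msize n \<beta>) = (c + 1) ^ msize n \<alpha> - c ^ msize n \<alpha>"
proof -
  have "{..\<alpha>} = insert \<alpha> {..<\<alpha>}"
    by auto
  moreover have "finite {..<\<alpha>}"
    using finite_atMost_fun[OF finite_idx assms[unfolded is_mindex_def]]
    by (rule rev_finite_subset) auto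
  ultimately show ?thesis
    using sum_mbinom_power[OF assms, of c] by (simp add: mbinom_def)
qed

lemma msize_diff:
  assumes "\<beta> \<le> \<alpha>"
  shows "msize n (\<lambda>p. \<alpha> p - \<beta> p) = msize n \<alpha> - msize n \<beta>"
  using assms unfolding msize_def by (intro sum_subtractf_nat) (auto dest: le_funD)

lemma msize_less:
  assumes "is_mindex n \<alpha>" "\<beta> < \<alpha>"
  shows "msize n \<beta> < msize n \<alpha>"
proof -
  obtain q where q: "\<beta> q < \<alpha> q"
    using assms(2) by (metis less_fun_def le_fun_def not_le)
  then have "q \<in> idx n"
    using assms(1) unfolding is_mindex_def by (metis not_less0)
  then show ?thesis
    unfolding msize_def using assms(2) q finite_idx
    by (intro sum_strict_mono_ex1) (auto dest: less_imp_le le_funD)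
qed

lemma Vset_subset_Un_diff: "Vset n \<alpha> \<subseteq> Vset n \<beta> \<union> Vset n (\<lambda>p. \<alpha> p - \<beta> p)"
proof -
  have "0 < \<beta> p \<or> 0 < \<alpha> p - \<beta> p" if "0 < \<alpha> p" for p :: "nat \<times> nat"
    using that by linarith
  then show ?thesis
    unfolding Vset_def by blast
qed

lemma kappa_recursion:
  assumes "is_mindex n \<alpha>" "1 \<le> n" "0 \<le> rho" "rho \<le> 1"
  shows "kappa n lam rho \<alpha> = lam ^ msize n \<alpha> * rho ^ card (insert 1 (Vset n \<alpha>))
    - (\<Sum>\<beta><\<alpha>. kappa n lam rho \<beta> * real (mbinom n \<alpha> \<beta>)
         * (lam ^ (msize n \<alpha> - msize n \<beta>) * rho ^ card (Vset n (\<lambda>p. \<alpha> p - \<beta> p))))"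
proof -
  have "Ev n rho (Xmon n lam (\<lambda>p. \<alpha> p - \<beta> p))
      = lam ^ (msize n \<alpha> - msize n \<beta>) * rho ^ card (Vset n (\<lambda>p. \<alpha> p - \<beta> p))"
    if "\<beta> \<in> {..<\<alpha>}" for \<beta>
    using that assms(3,4) by (simp add: Ev_Xmon msize_diff)
  then show ?thesis
    using assms
    by (subst kappa.simps) (simp only: if_True strictly_below_eq_lessThan Ev_xv_Xmon cong: sum.cong)
qed

lemma kappa_zero:
  assumes "1 \<le> n" "0 \<le> rho" "rho \<le> 1"
  shows "kappa n lam rho (\<lambda>_. 0) = rho"
proof -
  have "{..<(\<lambda>_ :: nat \<times> nat. 0 :: nat)} = {}"
    by (auto simp: less_fun_def le_fun_def)
  then show ?thesis
    using kappa_recursion[of n "\<lambda>_. 0", OF _ assms]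
    by (simp add: is_mindex_def msize_def Vset_def)
qed

lemma kappa_term_bound:
  assumes "is_mindex n \<alpha>" "\<beta> < \<alpha>" "0 \<le> lam" "0 \<le> rho" "rho \<le> 1"
    and IH: "\<bar>kappa n lam rho \<beta>\<bar>
      \<le> real (msize n \<beta> + 1) ^ msize n \<beta> * lam ^ msize n \<beta> * rho ^ card (Vset n \<beta>)"
  shows "\<bar>kappa n lam rho \<beta> * real (mbinom n \<alpha> \<beta>)
      * (lam ^ (msize n \<alpha> - msize n \<beta>) * rho ^ card (Vset n (\<lambda>p. \<alpha> p - \<beta> p)))\<bar>
    \<le> real (mbinom n \<alpha> \<beta>) * real (msize n \<alpha>) ^ msize n \<beta> * (lam ^ msize n \<alpha> * rho ^ card (Vset n \<alpha>))"
proof -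
  define m b where "m = msize n \<alpha>" and "b = msize n \<beta>"
  define V V1 V2 where "V = card (Vset n \<alpha>)" and "V1 = card (Vset n \<beta>)"
    and "V2 = card (Vset n (\<lambda>p. \<alpha> p - \<beta> p))"
  define C where "C = real (mbinom n \<alpha> \<beta>)"
  have "b < m"
    unfolding m_def b_def using assms(1,2) by (rule msize_less)
  then have growth: "real (b + 1) ^ b \<le> real m ^ b"
    by (intro power_mono) auto
  have lam: "lam ^ b * lam ^ (m - b) = lam ^ m"
    using \<open>b < m\<close> by (simp flip: power_add)
  have "V \<le> V1 + V2"
    unfolding V_def V1_def V2_def
    using card_mono[OF finite_UnI[OF finite_Vset finite_Vset] Vset_subset_Un_diff] card_Un_le
    by (rule order_trans)
  then have rho: "rho ^ V1 * rho ^ V2 \<le> rho ^ V"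
    unfolding power_add[symmetric] using assms(4,5) by (rule power_decreasing)
  have "\<bar>kappa n lam rho \<beta> * C * (lam ^ (m - b) * rho ^ V2)\<bar>
      = \<bar>kappa n lam rho \<beta>\<bar> * C * (lam ^ (m - b) * rho ^ V2)"
    using assms(3,4) by (simp add: abs_mult C_def)
  also have "\<dots> \<le> (real (b + 1) ^ b * lam ^ b * rho ^ V1) * C * (lam ^ (m - b) * rho ^ V2)"
    using IH assms(3,4) unfolding b_def V1_def C_def by (intro mult_right_mono) auto
  also have "\<dots> = C * real (b + 1) ^ b * (lam ^ b * lam ^ (m - b)) * (rho ^ V1 * rho ^ V2)"
    by (simp add: mult_ac)
  also have "\<dots> \<le> C * real m ^ b * lam ^ m * rho ^ V"
    unfolding lam using growth rho assms(3,4) unfolding C_def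
    by (intro mult_mono mult_left_mono) auto
  finally show ?thesis
    unfolding m_def b_def V_def V1_def V2_def C_def by (simp add: mult_ac)
qed

text \<open>Unlike the theorem, this includes \<open>\<alpha> = 0\<close> (where it reads \<open>|\<kappa>\<^sub>0| \<le> 1\<close>, as \<open>0 ^ 0 = 1\<close>):
  the induction needs it for the term \<open>\<beta> = 0\<close>.\<close>

lemma kappa_bound:
  assumes "1 \<le> n" "0 \<le> lam" "0 \<le> rho" "rho \<le> 1" "is_mindex n \<alpha>"
  shows "\<bar>kappa n lam rho \<alpha>\<bar>
    \<le> real (msize n \<alpha> + 1) ^ msize n \<alpha> * lam ^ msize n \<alpha> * rho ^ card (Vset n \<alpha>)"
  using assms(5)
proof (induction "msize n \<alpha>" arbitrary: \<alpha> rule: less_induct)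
  case less
  define m where "m = msize n \<alpha>"
  define L where "L = lam ^ m * rho ^ card (Vset n \<alpha>)"
  define T where "T \<beta> = kappa n lam rho \<beta> * real (mbinom n \<alpha> \<beta>)
    * (lam ^ (m - msize n \<beta>) * rho ^ card (Vset n (\<lambda>p. \<alpha> p - \<beta> p)))" for \<beta>
  have "card (Vset n \<alpha>) \<le> card (insert 1 (Vset n \<alpha>))"
    by (intro card_mono) (auto simp: finite_Vset)
  then have leading: "\<bar>lam ^ m * rho ^ card (insert 1 (Vset n \<alpha>))\<bar> \<le> L"
    unfolding L_def using assms(2-4) by (simp add: abs_mult mult_left_mono power_decreasing)
  have "\<bar>T \<beta>\<bar> \<le> real (mbinom n \<alpha> \<beta>) * real m ^ msize n \<beta> * L" if "\<beta> < \<alpha>" for \<beta>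
  proof -
    have "is_mindex n \<beta>"
      using less.prems that unfolding is_mindex_def by (metis le_0_eq le_funD less_imp_le)
    then show ?thesis
      unfolding T_def m_def L_def using less.prems that assms(2-4)
      by (intro kappa_term_bound less.hyps msize_less)
  qed
  then have "\<bar>\<Sum>\<beta><\<alpha>. T \<beta>\<bar> \<le> (\<Sum>\<beta><\<alpha>. real (mbinom n \<alpha> \<beta>) * real m ^ msize n \<beta>) * L"
    unfolding sum_distrib_right by (intro order_trans[OF sum_abs sum_mono]) auto
  also have "\<dots> = ((real m + 1) ^ m - real m ^ m) * L"
    unfolding m_def using less.prems by (simp add: sum_mbinom_power_lessThan)
  finally have terms: "\<bar>\<Sum>\<beta><\<alpha>. T \<beta>\<bar> \<le> ((real m + 1) ^ m - real m ^ m) * L" .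
  have "1 \<le> real m ^ m"
    using one_le_power[of "real m" m] by (cases "m = 0") auto
  moreover have "0 \<le> L"
    unfolding L_def using assms(2,3) by simp
  ultimately have absorb: "L \<le> real m ^ m * L"
    using mult_right_mono by fastforce
  have "kappa n lam rho \<alpha> = lam ^ m * rho ^ card (insert 1 (Vset n \<alpha>)) - (\<Sum>\<beta><\<alpha>. T \<beta>)"
    unfolding m_def T_def using less.prems assms(1,3,4) by (rule kappa_recursion)
  then have "\<bar>kappa n lam rho \<alpha>\<bar> \<le> \<bar>lam ^ m * rho ^ card (insert 1 (Vset n \<alpha>))\<bar> + \<bar>\<Sum>\<beta><\<alpha>. T \<beta>\<bar>"
    by (simp only: abs_triangle_ineq4)
  also have "\<dots> \<le> L + ((real m + 1) ^ m - real m ^ m) * L"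
    using leading terms by (rule add_mono)
  also have "\<dots> \<le> (real m + 1) ^ m * L"
    using absorb by (simp add: left_diff_distrib)
  finally show ?case
    unfolding m_def L_def by (simp add: mult_ac add.commute)
qed

theorem mainTheorem6:
  fixes n :: nat and lam rho :: real
  assumes "n \<ge> 1" and "lam \<ge> 0" and "0 < rho" and "rho < 1"
  shows "kappa n lam rho (\<lambda>_. 0) = rho \<and>
    (\<forall>\<alpha>. is_mindex n \<alpha> \<and> msize n \<alpha> \<ge> 1 \<longrightarrow>
       \<bar>kappa n lam rho \<alpha>\<bar>
         \<le> real (msize n \<alpha> + 1) ^ msize n \<alpha> * lam ^ msize n \<alpha> * rho ^ card (Vset n \<alpha>))"
  using assms kappa_zero kappa_bound by simp

end
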